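(* Let $M$ be a von Neumann algebra with a normal tracial state $\varphi$, and let $Z_1,\ldots,Z_n$ be finite ordered sets of selfadjoint elements of $M$ with $\alpha_i=\delta_0(Z_i)$ and $\alpha=\alpha_1+\cdots+\alpha_n$. Then \[\mathbb P^{\alpha}(Z_1\cup\cdots\cup Z_n)\le\mathbb P^{\alpha_1}(Z_1)+\cdots+\mathbb P^{\alpha_n}(Z_n)+\alpha\log(4\sqrt n).\]
   Context: $Z_1\cup\cdots\cup Z_n$ denotes the ordered tuple listing the elements of $Z_1$ in order, then those of $Z_2$, etc.; quantities for an ordered set are those of the corresponding tuple. Notation. $M_k^{sa}(\mathbb C)$: $k\times k$ selfadjoint complex matrices; $tr_k$ normalized trace; metric on $(M_k^{sa}(\mathbb C))^N$ from $|(x_1,\ldots,x_N)|_2=(\sum_i tr_k(x_i^2))^{1/2}$. For selfadjoint $w=(w_1,\ldots,w_N)$ in $M$, $\Gamma_R(w;m,k,\gamma)$ is the set of $(x_1,\ldots,x_N)\in(M_k^{sa}(\mathbb C))^N$ with $\|x_j\|\le R$ and $|tr_k(x_{i_1}\cdots x_{i_p})-\varphi(w_{i_1}\cdots w_{i_p})|<\gamma$ for all $1\le p\le m$, $i_1,\ldots,i_p\in\{1,\ldots,N\}$. Free packing entropy: for a metric space $X$, $P_\epsilon(X)$ is the maximum number of mutually disjoint open $\epsilon$-balls in $X$. Set $\mathbb P_{\epsilon,R}(w;m,\gamma)=\limsup_k k^{-2}\log P_\epsilon(\Gamma_R(w;m,k,\gamma))$ (w.r.t. $|\cdot|_2$,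 $\log0=-\infty$), $\mathbb P_{\epsilon,R}(w)=\inf_{m,\gamma}\mathbb P_{\epsilon,R}(w;m,\gamma)$, $\mathbb P^\alpha_R(w)=\limsup_{\epsilon\to0}[\mathbb P_{\epsilon,R}(w)+\alpha\log2\epsilon]$, and $\mathbb P^\alpha(w)=\sup_{R>0}\mathbb P^\alpha_R(w)$. $\delta_0$: vol is Lebesgue measure on $(M_k^{sa}(\mathbb C))^N$ for the norm $(k\sum_j tr_k(x_j^2))^{1/2}$; for selfadjoint tuples $x$ (length $N$) and $y$, $\Gamma_R(x:y;m,k,\gamma)$ is the projection onto the first $N$ coordinates of $\Gamma_R(x,y;m,k,\gamma)$, $\chi(x:y)=\sup_R\inf_{m,\gamma}\limsup_k[k^{-2}\log\mathrm{vol}\Gamma_R(x:y;m,k,\gamma)+\tfrac N2\log k]$; with $s_1,\ldots,s_N$ a free semicircular family free from $w$, $\delta_0(w)=N+\limsup_{\epsilon\to0}\chi(w_1+\epsilon s_1,\ldots,w_N+\epsilon s_N:s_1,\ldots,s_N)/|\log\epsilon|$. *)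

theory Defs
  imports "HOL-Analysis.Analysis"
begin

section \<open>Abstract von Neumann (W*-) algebras\<close>

text \<open>A unital complex *-algebra with a norm, given by its operations on the whole type 'a.\<close>
record 'a wstar_alg =
  vadd :: "'a \<Rightarrow> 'a \<Rightarrow> 'a"
  vzero :: 'a
  smul :: "complex \<Rightarrow> 'a \<Rightarrow> 'a"
  vmul :: "'a \<Rightarrow> 'a \<Rightarrow> 'a"
  vone :: 'a
  vstar :: "'a \<Rightarrow> 'a"
  vnorm :: "'a \<Rightarrow> real"

definition vsub :: "'a wstar_alg \<Rightarrow> 'a \<Rightarrow> 'a \<Rightarrow> 'a" where
  "vsub A a b = vadd A a (smul A (-1) b)"

definition cstar_algebra :: "'a wstar_alg \<Rightarrow> bool" where
  "cstar_algebra A \<longleftrightarrow>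
     (\<forall>a b c. vadd A (vadd A a b) c = vadd A a (vadd A b c)) \<and>
     (\<forall>a b. vadd A a b = vadd A b a) \<and>
     (\<forall>a. vadd A a (vzero A) = a) \<and>
     (\<forall>a. smul A 1 a = a) \<and>
     (\<forall>a. smul A 0 a = vzero A) \<and>
     (\<forall>c d a. smul A c (smul A d a) = smul A (c * d) a) \<and>
     (\<forall>c d a. smul A (c + d) a = vadd A (smul A c a) (smul A d a)) \<and>
     (\<forall>c a b. smul A c (vadd A a b) = vadd A (smul A c a) (smul A c b)) \<and>
     (\<forall>a b c. vmul A (vmul A a b) c = vmul A a (vmul A b c)) \<and>
     (\<forall>a. vmul A (vone A) a = a \<and> vmul A a (vone A) = a) \<and>
     (\<forall>a b c. vmul A a (vadd A b c) = vadd A (vmul A a b) (vmul A a c)) \<and>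
     (\<forall>a b c. vmul A (vadd A a b) c = vadd A (vmul A a c) (vmul A b c)) \<and>
     (\<forall>z a b. vmul A (smul A z a) b = smul A z (vmul A a b)) \<and>
     (\<forall>z a b. vmul A a (smul A z b) = smul A z (vmul A a b)) \<and>
     (\<forall>a. vstar A (vstar A a) = a) \<and>
     (\<forall>a b. vstar A (vadd A a b) = vadd A (vstar A a) (vstar A b)) \<and>
     (\<forall>z a. vstar A (smul A z a) = smul A (cnj z) (vstar A a)) \<and>
     (\<forall>a b. vstar A (vmul A a b) = vmul A (vstar A b) (vstar A a)) \<and>
     (\<forall>a. vnorm A a = 0 \<longleftrightarrow> a = vzero A) \<and>
     (\<forall>a b. vnorm A (vadd A a b) \<le> vnorm A a + vnorm A b) \<and>
     (\<forall>z a. vnorm A (smul A z a) = cmod z * vnorm A a) \<and>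
     (\<forall>a b. vnorm A (vmul A a b) \<le> vnorm A a * vnorm A b) \<and>
     (\<forall>a. vnorm A (vmul A (vstar A a) a) = (vnorm A a)\<^sup>2) \<and>
     (\<forall>f :: nat \<Rightarrow> 'a. (\<forall>e>0. \<exists>N. \<forall>m\<ge>N. \<forall>n\<ge>N. vnorm A (vsub A (f m) (f n)) < e)
        \<longrightarrow> (\<exists>a. \<forall>e>0. \<exists>N. \<forall>n\<ge>N. vnorm A (vsub A (f n) a) < e))"

definition selfadj :: "'a wstar_alg \<Rightarrow> 'a \<Rightarrow> bool" where
  "selfadj A a \<longleftrightarrow> vstar A a = a"

definition vpos :: "'a wstar_alg \<Rightarrow> 'a \<Rightarrow> bool" where
  "vpos A a \<longleftrightarrow> (\<exists>b. a = vmul A (vstar A b) b)"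

definition vle :: "'a wstar_alg \<Rightarrow> 'a \<Rightarrow> 'a \<Rightarrow> bool" where
  "vle A a b \<longleftrightarrow> vpos A (vsub A b a)"

text \<open>Bounded, upward directed nonempty families of selfadjoint elements (nets, indexed by themselves).\<close>
definition bdd_directed :: "'a wstar_alg \<Rightarrow> 'a set \<Rightarrow> bool" where
  "bdd_directed A D \<longleftrightarrow> D \<noteq> {} \<and> (\<forall>x\<in>D. selfadj A x) \<and>
     (\<forall>x\<in>D. \<forall>y\<in>D. \<exists>z\<in>D. vle A x z \<and> vle A y z) \<and>
     (\<exists>c. selfadj A c \<and> (\<forall>x\<in>D. vle A x c))"

definition is_vsup :: "'a wstar_alg \<Rightarrow> 'a set \<Rightarrow> 'a \<Rightarrow> bool" where
  "is_vsup A D s \<longleftrightarrow> selfadj A s \<and> (\<forall>x\<in>D. vle A x s) \<and>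
     (\<forall>c. selfadj A c \<and> (\<forall>x\<in>D. vle A x c) \<longrightarrow> vle A s c)"

definition is_state :: "'a wstar_alg \<Rightarrow> ('a \<Rightarrow> complex) \<Rightarrow> bool" where
  "is_state A \<omega> \<longleftrightarrow> (\<forall>a b. \<omega> (vadd A a b) = \<omega> a + \<omega> b) \<and>
     (\<forall>z a. \<omega> (smul A z a) = z * \<omega> a) \<and>
     (\<forall>a. vpos A a \<longrightarrow> Im (\<omega> a) = 0 \<and> Re (\<omega> a) \<ge> 0) \<and>
     \<omega> (vone A) = 1"

definition normal_state :: "'a wstar_alg \<Rightarrow> ('a \<Rightarrow> complex) \<Rightarrow> bool" where
  "normal_state A \<omega> \<longleftrightarrow> is_state A \<omega> \<and>
     (\<forall>D s. bdd_directed A D \<and> is_vsup A D s \<longrightarrow> Re (\<omega> s) = (SUP x\<in>D. Re (\<omega> x)))"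

text \<open>Von Neumann algebra, abstractly (Kadison's characterisation of W*-algebras):
  a C*-algebra that is monotone complete and has a separating family of normal states.\<close>
definition von_neumann_algebra :: "'a wstar_alg \<Rightarrow> bool" where
  "von_neumann_algebra A \<longleftrightarrow> cstar_algebra A \<and>
     (\<forall>D. bdd_directed A D \<longrightarrow> (\<exists>s. is_vsup A D s)) \<and>
     (\<forall>a. a \<noteq> vzero A \<longrightarrow> (\<exists>\<omega>. normal_state A \<omega> \<and> \<omega> a \<noteq> 0))"

definition normal_tracial_state :: "'a wstar_alg \<Rightarrow> ('a \<Rightarrow> complex) \<Rightarrow> bool" where
  "normal_tracial_state A \<phi> \<longleftrightarrow> normal_state A \<phi> \<and> (\<forall>a b. \<phi> (vmul A a b) = \<phi> (vmul A b a))"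

definition vmom :: "'a wstar_alg \<Rightarrow> ('a \<Rightarrow> complex) \<Rightarrow> 'a list \<Rightarrow> nat list \<Rightarrow> complex" where
  "vmom A \<phi> ws u = \<phi> (foldr (\<lambda>i acc. vmul A (ws ! i) acc) u (vone A))"

section \<open>k x k complex matrices\<close>

type_synonym cmat = "nat \<Rightarrow> nat \<Rightarrow> complex"

definition mmul :: "nat \<Rightarrow> cmat \<Rightarrow> cmat \<Rightarrow> cmat" where
  "mmul k X Y = (\<lambda>i j. if i < k \<and> j < k then (\<Sum>l<k. X i l * Y l j) else 0)"

definition mone :: "nat \<Rightarrow> cmat" where
  "mone k = (\<lambda>i j. if i < k \<and> i = j then 1 else 0)"

definition msub :: "cmat \<Rightarrow> cmat \<Rightarrow> cmat" where
  "msub X Y = (\<lambda>i j. X i j - Y i j)"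

definition mtr :: "nat \<Rightarrow> cmat \<Rightarrow> complex" where
  "mtr k X = (\<Sum>i<k. X i i) / of_nat k"

definition msa :: "nat \<Rightarrow> cmat \<Rightarrow> bool" where
  "msa k X \<longleftrightarrow> (\<forall>i j. (k \<le> i \<or> k \<le> j) \<longrightarrow> X i j = 0) \<and>
     (\<forall>i<k. \<forall>j<k. X i j = cnj (X j i))"

definition mopnorm :: "nat \<Rightarrow> cmat \<Rightarrow> real" where
  "mopnorm k X = Sup {sqrt (\<Sum>i<k. (cmod (\<Sum>j<k. X i j * v j))\<^sup>2) | v.
      (\<Sum>j<k. (cmod (v j))\<^sup>2) \<le> 1}"

definition mword :: "nat \<Rightarrow> cmat list \<Rightarrow> nat list \<Rightarrow> cmat" where
  "mword k xs u = foldr (\<lambda>i acc. mmul k (xs ! i) acc) u (mone k)"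

definition tdist :: "nat \<Rightarrow> cmat list \<Rightarrow> cmat list \<Rightarrow> real" where
  "tdist k xs ys = sqrt (\<Sum>i<length xs. Re (mtr k (mmul k (msub (xs ! i) (ys ! i)) (msub (xs ! i) (ys ! i)))))"

section \<open>Microstates for a moment functional mu on words over {0..<L}\<close>

definition Gamma :: "(nat list \<Rightarrow> complex) \<Rightarrow> nat \<Rightarrow> real \<Rightarrow> nat \<Rightarrow> nat \<Rightarrow> real \<Rightarrow> cmat list set" where
  "Gamma \<mu> L R m k \<gamma> = {xs. length xs = L \<and> (\<forall>x\<in>set xs. msa k x \<and> mopnorm k x \<le> R) \<and>
     (\<forall>u. 1 \<le> length u \<and> length u \<le> m \<and> set u \<subseteq> {..<L} \<longrightarrow>
        cmod (mtr k (mword k xs u) - \<mu> u) < \<gamma>)}"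

section \<open>Free packing entropy\<close>

definition packing_num :: "('b \<Rightarrow> 'b \<Rightarrow> real) \<Rightarrow> 'b set \<Rightarrow> real \<Rightarrow> enat" where
  "packing_num d X \<epsilon> = Sup {enat (card C) | C. finite C \<and> C \<subseteq> X \<and>
     (\<forall>c\<in>C. \<forall>c'\<in>C. c \<noteq> c' \<longrightarrow> {y\<in>X. d c y < \<epsilon>} \<inter> {y\<in>X. d c' y < \<epsilon>} = {})}"

definition eln_enat :: "enat \<Rightarrow> ereal" where
  "eln_enat n = (if n = 0 then -\<infinity> else if n = \<infinity> then \<infinity> else ereal (ln (real (the_enat n))))"

definition P_eps_R_mg :: "(nat list \<Rightarrow> complex) \<Rightarrow> nat \<Rightarrow> real \<Rightarrow> real \<Rightarrow> nat \<Rightarrow> real \<Rightarrow> ereal" where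
  "P_eps_R_mg \<mu> L \<epsilon> R m \<gamma> =
     limsup (\<lambda>k. ereal (1 / (real k)\<^sup>2) * eln_enat (packing_num (tdist k) (Gamma \<mu> L R m k \<gamma>) \<epsilon>))"

definition P_eps_R :: "(nat list \<Rightarrow> complex) \<Rightarrow> nat \<Rightarrow> real \<Rightarrow> real \<Rightarrow> ereal" where
  "P_eps_R \<mu> L \<epsilon> R = (INF m\<in>{1..}. INF \<gamma>\<in>{0<..}. P_eps_R_mg \<mu> L \<epsilon> R m \<gamma>)"

definition P_alpha_R :: "(nat list \<Rightarrow> complex) \<Rightarrow> nat \<Rightarrow> ereal \<Rightarrow> real \<Rightarrow> ereal" where
  "P_alpha_R \<mu> L \<alpha> R = Limsup (at_right 0) (\<lambda>\<epsilon>. P_eps_R \<mu> L \<epsilon> R + \<alpha> * ereal (ln (2 * \<epsilon>)))"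

definition P_alpha :: "(nat list \<Rightarrow> complex) \<Rightarrow> nat \<Rightarrow> ereal \<Rightarrow> ereal" where
  "P_alpha \<mu> L \<alpha> = (SUP R\<in>{0<..}. P_alpha_R \<mu> L \<alpha> R)"

definition packing_entropy :: "'a wstar_alg \<Rightarrow> ('a \<Rightarrow> complex) \<Rightarrow> ereal \<Rightarrow> 'a list \<Rightarrow> ereal" where
  "packing_entropy A \<phi> \<alpha> ws = P_alpha (vmom A \<phi> ws) (length ws) \<alpha>"

section \<open>Free entropy dimension delta_0\<close>

text \<open>Lebesgue measure on (M_k^sa)^L for the Hilbert-Schmidt norm, via an isometric
  coordinate map from R^(L k^2) (orthonormal basis E_aa, (E_ab+E_ba)/sqrt 2, i(E_ab-E_ba)/sqrt 2).\<close>
definition coord_mat :: "nat \<Rightarrow> (nat \<Rightarrow> real) \<Rightarrow> cmat" where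
  "coord_mat k c = (\<lambda>a b. if a < k \<and> b < k then
      (if a = b then complex_of_real (c (a * k + a))
       else if a < b then Complex (c (a * k + b)) (c (b * k + a)) / complex_of_real (sqrt 2)
       else Complex (c (b * k + a)) (- c (a * k + b)) / complex_of_real (sqrt 2))
     else 0)"

definition coord_tuple :: "nat \<Rightarrow> nat \<Rightarrow> (nat \<Rightarrow> real) \<Rightarrow> cmat list" where
  "coord_tuple L k c = map (\<lambda>j. coord_mat k (\<lambda>p. c (j * k * k + p))) [0..<L]"

definition mvol :: "nat \<Rightarrow> nat \<Rightarrow> cmat list set \<Rightarrow> ennreal" where
  "mvol L k S = emeasure (PiM {..<L * k * k} (\<lambda>_. lborel))
      {c \<in> space (PiM {..<L * k * k} (\<lambda>_. lborel)). coord_tuple L k c \<in> S}"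

definition eln_ennreal :: "ennreal \<Rightarrow> ereal" where
  "eln_ennreal v = (if v = 0 then -\<infinity> else if v = top then \<infinity> else ereal (ln (enn2real v)))"

text \<open>Gamma_R(x:y), x of length L, y of length L', joint moments mu on words over {0..<L+L'}\<close>
definition Gamma_proj :: "(nat list \<Rightarrow> complex) \<Rightarrow> nat \<Rightarrow> nat \<Rightarrow> real \<Rightarrow> nat \<Rightarrow> nat \<Rightarrow> real \<Rightarrow> cmat list set" where
  "Gamma_proj \<mu> L L' R m k \<gamma> = (\<lambda>xs. take L xs) ` Gamma \<mu> (L + L') R m k \<gamma>"

definition chi_rel :: "(nat list \<Rightarrow> complex) \<Rightarrow> nat \<Rightarrow> nat \<Rightarrow> ereal" where
  "chi_rel \<mu> L L' = (SUP R\<in>{0<..}. INF m\<in>{1..}. INF \<gamma>\<in>{0<..}.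
     limsup (\<lambda>k. ereal (1 / (real k)\<^sup>2) * eln_ennreal (mvol L k (Gamma_proj \<mu> L L' R m k \<gamma>))
                 + ereal (real L / 2 * ln (real k))))"

text \<open>noncommutative polynomials: finitely supported functions on words\<close>
type_synonym ncpoly = "nat list \<Rightarrow> complex"

definition pmul :: "ncpoly \<Rightarrow> ncpoly \<Rightarrow> ncpoly" where
  "pmul p q = (\<lambda>u. \<Sum>i\<le>length u. p (take i u) * q (drop i u))"

definition pone :: ncpoly where
  "pone = (\<lambda>u. if u = [] then 1 else 0)"

definition pprod :: "ncpoly list \<Rightarrow> ncpoly" where
  "pprod ps = foldr pmul ps pone"

definition plin :: "(nat list \<Rightarrow> complex) \<Rightarrow> ncpoly \<Rightarrow> complex" where
  "plin \<psi> p = (\<Sum>u\<in>{u. p u \<noteq> 0}. p u * \<psi> u)"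

text \<open>letters 0..<N are w_1..w_N (colour 0), letter N+j is s_(j+1) (colour j+1)\<close>
definition colour :: "nat \<Rightarrow> nat \<Rightarrow> nat" where
  "colour N l = (if l < N then 0 else l - N + 1)"

definition in_colour :: "nat \<Rightarrow> nat \<Rightarrow> ncpoly \<Rightarrow> bool" where
  "in_colour N c p \<longleftrightarrow> finite {u. p u \<noteq> 0} \<and>
     (\<forall>u. p u \<noteq> 0 \<longrightarrow> (\<forall>l\<in>set u. l < 2 * N \<and> colour N l = c))"

definition sc_mom :: "nat \<Rightarrow> complex" where
  "sc_mom n = (if even n then of_nat ((n choose (n div 2)) div (n div 2 + 1)) else 0)"

text \<open>psi is the joint distribution of (w_1..w_N, s_1..s_N), s a free semicircular family free from w\<close>
definition is_free_sc_ext :: "(nat list \<Rightarrow> complex) \<Rightarrow> nat \<Rightarrow> (nat list \<Rightarrow> complex) \<Rightarrow> bool" where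
  "is_free_sc_ext \<mu> N \<psi> \<longleftrightarrow>
     (\<forall>u. set u \<subseteq> {..<N} \<longrightarrow> \<psi> u = \<mu> u) \<and>
     (\<forall>j<N. \<forall>n. \<psi> (replicate n (N + j)) = sc_mom n) \<and>
     (\<forall>u. \<not> set u \<subseteq> {..<2 * N} \<longrightarrow> \<psi> u = 0) \<and>
     (\<forall>ps cs. length ps = length cs \<and> ps \<noteq> [] \<and>
        (\<forall>i<length cs. cs ! i \<le> N \<and> in_colour N (cs ! i) (ps ! i) \<and> plin \<psi> (ps ! i) = 0) \<and>
        (\<forall>i. Suc i < length cs \<longrightarrow> cs ! i \<noteq> cs ! Suc i)
        \<longrightarrow> plin \<psi> (pprod ps) = 0)"

definition free_sc_ext :: "(nat list \<Rightarrow> complex) \<Rightarrow> nat \<Rightarrow> nat list \<Rightarrow> complex" where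
  "free_sc_ext \<mu> N = (THE \<psi>. is_free_sc_ext \<mu> N \<psi>)"

text \<open>joint moments of (w_1 + eps s_1, ..., w_N + eps s_N, s_1, ..., s_N)\<close>
definition sub_poly :: "nat \<Rightarrow> real \<Rightarrow> nat \<Rightarrow> ncpoly" where
  "sub_poly N \<epsilon> l = (if l < N then (\<lambda>v. if v = [l] then 1 else if v = [N + l] then complex_of_real \<epsilon> else 0)
                      else (\<lambda>v. if v = [l] then 1 else 0))"

definition reg_mom :: "(nat list \<Rightarrow> complex) \<Rightarrow> nat \<Rightarrow> real \<Rightarrow> nat list \<Rightarrow> complex" where
  "reg_mom \<mu> N \<epsilon> u = plin (free_sc_ext \<mu> N) (pprod (map (sub_poly N \<epsilon>) u))"

definition delta0_mu :: "(nat list \<Rightarrow> complex) \<Rightarrow> nat \<Rightarrow> ereal" where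
  "delta0_mu \<mu> N = ereal (real N) +
     Limsup (at_right 0) (\<lambda>\<epsilon>. chi_rel (reg_mom \<mu> N \<epsilon>) N N * ereal (1 / \<bar>ln \<epsilon>\<bar>))"

definition delta0 :: "'a wstar_alg \<Rightarrow> ('a \<Rightarrow> complex) \<Rightarrow> 'a list \<Rightarrow> ereal" where
  "delta0 A \<phi> ws = delta0_mu (vmom A \<phi> ws) (length ws)"

end

theory Submission
  imports Defs
begin

text \<open>Write \<delta> = \<epsilon> / (4 sqrt n). A microstate for Z_1 \<union> ... \<union> Z_n splits into n
  blocks, each a microstate for the corresponding Z_i. Since the squared distance is additive
  over blocks, two microstates whose blocks are all within 4\<delta> = \<epsilon> / sqrt n of each other are
  within \<epsilon>. Maximal \<delta>-packings are 2\<delta>-nets, so an \<epsilon>-packing of the microstates for the union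
  injects into a product of \<delta>-packings, and the packing number is at most the product of the
  packing numbers. Taking logarithms, limits in k and infima over (m, \<gamma>) gives
  P_\<epsilon>(Z) \<le> \<Sum> P_\<delta>(Z_i); the substitution \<epsilon> = 4 sqrt n \<delta> in the
  \<alpha>-weighted limit superior produces the term \<alpha> log (4 sqrt n).\<close>

section \<open>Extended-real limits and infima\<close>

lemma ereal_add_less_split:
  fixes a b z :: ereal
  assumes "a + b < z"
  obtains a' b' where "a < a'" "b < b'" "a' + b' \<le> z"
proof -
  obtain r where r: "a + b < ereal r" "ereal r < z"
    using ereal_dense2[OF assms] by blast
  have "b < ereal r - a"
    using r(1) by (cases a; cases b) auto
  then obtain y where y: "b < ereal y" "ereal y < ereal r - a"
    using ereal_dense2 by blast
  have "a < ereal (r - y)"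
    using y(2) by (cases a) auto
  with y(1) r(2) show thesis
    by (intro that[of "ereal (r - y)" "ereal y"]) auto
qed

lemma Limsup_add_le:
  fixes f g :: "'b \<Rightarrow> ereal"
  shows "Limsup F (\<lambda>x. f x + g x) \<le> Limsup F f + Limsup F g"
proof (rule dense_ge)
  fix z assume "Limsup F f + Limsup F g < z"
  then obtain a b where ab: "Limsup F f < a" "Limsup F g < b" "a + b \<le> z"
    by (rule ereal_add_less_split)
  have "eventually (\<lambda>x. f x + g x \<le> z) F"
    using Limsup_lessD[OF ab(1)] Limsup_lessD[OF ab(2)]
  proof eventually_elim
    case (elim x)
    then have "f x + g x \<le> a + b" by (intro add_mono) auto
    with ab(3) show ?case by simp
  qed
  then show "Limsup F (\<lambda>x. f x + g x) \<le> z" by (rule Limsup_bounded)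
qed

lemma Limsup_sum_le:
  fixes f :: "'i \<Rightarrow> 'b \<Rightarrow> ereal"
  assumes "finite I"
  shows "Limsup F (\<lambda>x. \<Sum>i\<in>I. f i x) \<le> (\<Sum>i\<in>I. Limsup F (f i))"
  using assms
proof (induction I rule: finite_induct)
  case empty
  then show ?case by (simp add: Limsup_bounded)
next
  case (insert j I)
  have "Limsup F (\<lambda>x. \<Sum>i\<in>insert j I. f i x) = Limsup F (\<lambda>x. f j x + (\<Sum>i\<in>I. f i x))"
    using insert.hyps by simp
  also have "\<dots> \<le> Limsup F (f j) + Limsup F (\<lambda>x. \<Sum>i\<in>I. f i x)"
    by (rule Limsup_add_le)
  also have "\<dots> \<le> Limsup F (f j) + (\<Sum>i\<in>I. Limsup F (f i))"
    by (intro add_left_mono insert.IH)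
  finally show ?case
    using insert.hyps by simp
qed

lemma Limsup_at_right_0_rescale:
  fixes g :: "real \<Rightarrow> ereal"
  assumes "c > 0"
  shows "Limsup (at_right 0) (\<lambda>\<epsilon>. g (\<epsilon> / c)) = Limsup (at_right 0) g"
proof -
  have "Limsup (at_right 0) (\<lambda>\<epsilon>. g (\<epsilon> / c)) = Limsup (filtermap (times (inverse c)) (at_right 0)) g"
    using assms by (subst Limsup_filtermap_eq) (auto simp: inj_on_def divide_inverse_commute)
  also have "filtermap (times (inverse c)) (at_right 0) = at_right (0::real)"
    using filtermap_times_pos_at_right[of "inverse c" 0] assms by simp
  finally show ?thesis .
qed

lemma le_add_INF_ereal:
  fixes f :: "'x \<Rightarrow> ereal" and g :: "'y \<Rightarrow> ereal"
  assumes "\<And>x y. x \<in> S \<Longrightarrow> y \<in> T \<Longrightarrow> L \<le> f x + g y"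
  shows "L \<le> (INF x\<in>S. f x) + (INF y\<in>T. g y)"
proof (rule dense_ge)
  fix z assume "(INF x\<in>S. f x) + (INF y\<in>T. g y) < z"
  then obtain a b where ab: "(INF x\<in>S. f x) < a" "(INF y\<in>T. g y) < b" "a + b \<le> z"
    by (rule ereal_add_less_split)
  obtain x where x: "x \<in> S" "f x < a" using ab(1) by (auto simp: INF_less_iff)
  obtain y where y: "y \<in> T" "g y < b" using ab(2) by (auto simp: INF_less_iff)
  have "L \<le> f x + g y" using assms x y by auto
  also have "\<dots> \<le> a + b" using x y by (intro add_mono) auto
  finally show "L \<le> z" using ab(3) by simp
qed

lemma le_sum_INF_ereal:
  fixes f :: "'i \<Rightarrow> 'x \<Rightarrow> ereal"
  assumes "finite I"
    and "\<And>x. (\<And>i. i \<in> I \<Longrightarrow> x i \<in> S i) \<Longrightarrow> L \<le> (\<Sum>i\<in>I. f i (x i))"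
  shows "L \<le> (\<Sum>i\<in>I. INF y\<in>S i. f i y)"
  using assms
proof (induction I arbitrary: L rule: finite_induct)
  case empty
  then show ?case by fastforce
next
  case (insert j I)
  have "L \<le> (INF y\<in>S j. f j y) + (INF x\<in>{x. \<forall>i\<in>I. x i \<in> S i}. \<Sum>i\<in>I. f i (x i))"
  proof (rule le_add_INF_ereal)
    fix y x assume y: "y \<in> S j" and x: "x \<in> {x. \<forall>i\<in>I. x i \<in> S i}"
    have "L \<le> (\<Sum>i\<in>insert j I. f i ((x(j := y)) i))"
      using x y by (intro insert.prems) auto
    also have "\<dots> = f j y + (\<Sum>i\<in>I. f i (x i))"
      using insert.hyps by (simp, intro arg_cong2[where f="(+)"] refl sum.cong) auto
    finally show "L \<le> f j y + (\<Sum>i\<in>I. f i (x i))" .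
  qed
  also have "\<dots> \<le> (INF y\<in>S j. f j y) + (\<Sum>i\<in>I. INF y\<in>S i. f i y)"
    by (intro add_left_mono insert.IH) (auto intro: INF_lower)
  finally show ?case
    using insert.hyps by simp
qed

lemma ereal_nonneg_mult_sum:
  fixes f :: "'i \<Rightarrow> ereal"
  assumes "c \<ge> 0"
  shows "ereal c * (\<Sum>i\<in>I. f i) = (\<Sum>i\<in>I. ereal c * f i)"
  using distrib_left_ereal_nn[OF assms]
  by (induction I rule: infinite_finite_induct) (simp_all add: mult.commute)

text \<open>Substituting \<epsilon> / c for \<epsilon> shifts each weighted term r i * ln (2\<epsilon>) by r i * ln c.\<close>
lemma Limsup_log_weighted_rescaled_sum_le:
  fixes P :: "real \<Rightarrow> ereal" and Q :: "'i \<Rightarrow> real \<Rightarrow> ereal" and r :: "'i \<Rightarrow> real"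
  assumes "finite I" "c > 0" and PQ: "\<And>\<epsilon>. \<epsilon> > 0 \<Longrightarrow> P \<epsilon> \<le> (\<Sum>i\<in>I. Q i (\<epsilon> / c))"
  shows "Limsup (at_right 0) (\<lambda>\<epsilon>. P \<epsilon> + ereal (\<Sum>i\<in>I. r i) * ereal (ln (2 * \<epsilon>)))
    \<le> (\<Sum>i\<in>I. Limsup (at_right 0) (\<lambda>\<epsilon>. Q i \<epsilon> + ereal (r i) * ereal (ln (2 * \<epsilon>))))
      + ereal ((\<Sum>i\<in>I. r i) * ln c)"
proof -
  define g where "g i \<epsilon> = Q i \<epsilon> + ereal (r i) * ereal (ln (2 * \<epsilon>))" for i \<epsilon>
  define K where "K = ereal ((\<Sum>i\<in>I. r i) * ln c)"
  have pointwise: "P \<epsilon> + ereal (\<Sum>i\<in>I. r i) * ereal (ln (2 * \<epsilon>)) \<le> (\<Sum>i\<in>I. g i (\<epsilon> / c)) + K"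
    if "\<epsilon> > 0" for \<epsilon>
  proof -
    have "(\<Sum>i\<in>I. r i * ln (2 * (\<epsilon> / c))) + (\<Sum>i\<in>I. r i) * ln c = (\<Sum>i\<in>I. r i) * ln (2 * \<epsilon>)"
      using that \<open>c > 0\<close>
      by (simp add: ln_div ln_mult right_diff_distrib sum_subtractf sum_distrib_right)
    then have "(\<Sum>i\<in>I. g i (\<epsilon> / c)) + K = (\<Sum>i\<in>I. Q i (\<epsilon> / c)) + ereal ((\<Sum>i\<in>I. r i) * ln (2 * \<epsilon>))"
      by (simp add: g_def K_def sum.distrib add.assoc)
    then show ?thesis
      using add_right_mono[OF PQ[OF that]] by simp
  qed
  have "Limsup (at_right 0) (\<lambda>\<epsilon>. P \<epsilon> + ereal (\<Sum>i\<in>I. r i) * ereal (ln (2 * \<epsilon>)))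
      \<le> Limsup (at_right 0) (\<lambda>\<epsilon>. (\<Sum>i\<in>I. g i (\<epsilon> / c)) + K)"
    by (rule Limsup_mono) (use eventually_at_right_less[of "0::real"] pointwise in \<open>auto elim: eventually_mono\<close>)
  also have "\<dots> \<le> Limsup (at_right 0) (\<lambda>\<epsilon>. \<Sum>i\<in>I. g i (\<epsilon> / c)) + Limsup (at_right (0::real)) (\<lambda>_. K)"
    by (rule Limsup_add_le)
  also have "\<dots> \<le> (\<Sum>i\<in>I. Limsup (at_right 0) (\<lambda>\<epsilon>. g i (\<epsilon> / c))) + K"
    by (intro add_mono Limsup_sum_le Limsup_bounded \<open>finite I\<close>) auto
  also have "\<dots> = (\<Sum>i\<in>I. Limsup (at_right 0) (g i)) + K"
    using \<open>c > 0\<close> by (simp add: Limsup_at_right_0_rescale)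
  finally show ?thesis
    unfolding g_def K_def .
qed

section \<open>Packing numbers of pseudometric spaces\<close>

definition is_packing :: "('b \<Rightarrow> 'b \<Rightarrow> real) \<Rightarrow> 'b set \<Rightarrow> real \<Rightarrow> 'b set \<Rightarrow> bool" where
  "is_packing d X \<epsilon> C \<longleftrightarrow> finite C \<and> C \<subseteq> X \<and>
     (\<forall>c\<in>C. \<forall>c'\<in>C. c \<noteq> c' \<longrightarrow> {y\<in>X. d c y < \<epsilon>} \<inter> {y\<in>X. d c' y < \<epsilon>} = {})"

lemma packing_num_eq_Sup: "packing_num d X \<epsilon> = Sup {enat (card C) | C. is_packing d X \<epsilon> C}"
  unfolding packing_num_def is_packing_def by simp

lemma card_le_packing_num: "is_packing d X \<epsilon> C \<Longrightarrow> enat (card C) \<le> packing_num d X \<epsilon>"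
  unfolding packing_num_eq_Sup by (rule Sup_upper) blast

definition pseudometric_on :: "('b \<Rightarrow> 'b \<Rightarrow> real) \<Rightarrow> 'b set \<Rightarrow> bool" where
  "pseudometric_on d Y \<longleftrightarrow> (\<forall>x\<in>Y. d x x = 0) \<and> (\<forall>x\<in>Y. \<forall>y\<in>Y. d x y = d y x) \<and>
     (\<forall>x\<in>Y. \<forall>y\<in>Y. \<forall>z\<in>Y. d x z \<le> d x y + d y z)"

lemma pseudometric_on_subset: "pseudometric_on d Y \<Longrightarrow> X \<subseteq> Y \<Longrightarrow> pseudometric_on d X"
  unfolding pseudometric_on_def by blast

lemma pseudometric_on_nonneg:
  assumes "pseudometric_on d Y" "x \<in> Y" "y \<in> Y"
  shows "0 \<le> d x y"
proof -
  have "d x x \<le> d x y + d y x" "d x x = 0" "d y x = d x y"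
    using assms unfolding pseudometric_on_def by blast+
  then show ?thesis by simp
qed

lemma exists_maximal_packing_within:
  assumes "finite T" "T \<subseteq> Y"
  obtains D where "is_packing d Y \<delta> D" "D \<subseteq> T"
    "\<And>D'. is_packing d Y \<delta> D' \<Longrightarrow> D' \<subseteq> T \<Longrightarrow> card D' \<le> card D"
proof -
  have "is_packing d Y \<delta> {}" by (simp add: is_packing_def)
  moreover have "card D' < Suc (card T)" if "D' \<subseteq> T" for D'
    using card_mono[OF assms(1) that] by simp
  ultimately obtain D where "is_packing d Y \<delta> D \<and> D \<subseteq> T"
      "\<forall>D'. is_packing d Y \<delta> D' \<and> D' \<subseteq> T \<longrightarrow> card D' \<le> card D"
    using ex_has_greatest_nat[of "\<lambda>D. is_packing d Y \<delta> D \<and> D \<subseteq> T" "{}" card "Suc (card T)"]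
    by blast
  then show thesis using that by blast
qed

lemma maximal_packing_within_is_net:
  assumes pm: "pseudometric_on d Y" and "\<delta> > 0"
    and D: "is_packing d Y \<delta> D" "D \<subseteq> T" "T \<subseteq> Y"
    and max: "\<And>D'. is_packing d Y \<delta> D' \<Longrightarrow> D' \<subseteq> T \<Longrightarrow> card D' \<le> card D"
    and x: "x \<in> T"
  shows "\<exists>e\<in>D. d x e < 2 * \<delta>"
proof (cases "x \<in> D")
  case True
  then show ?thesis
    using pm x D \<open>\<delta> > 0\<close> unfolding pseudometric_on_def by (metis mult_pos_pos subsetD zero_less_numeral)
next
  case False
  have "finite D" using D(1) by (simp add: is_packing_def)
  then have "\<not> is_packing d Y \<delta> (insert x D)"
    using max[of "insert x D"] False x D(2) by fastforce
  moreover have "finite (insert x D)" "insert x D \<subseteq> Y"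
    using \<open>finite D\<close> D x by auto
  ultimately obtain c c' y where cc: "c \<in> insert x D" "c' \<in> insert x D" "c \<noteq> c'"
      "y \<in> Y" "d c y < \<delta>" "d c' y < \<delta>"
    unfolding is_packing_def by blast
  have "\<not> (c \<in> D \<and> c' \<in> D)"
    using D(1) cc unfolding is_packing_def by blast
  with cc obtain e where e: "e \<in> D" "d x y < \<delta>" "d e y < \<delta>"
    by blast
  have "d x e \<le> d x y + d e y"
    using pm e(1) cc(4) x D unfolding pseudometric_on_def by (metis subsetD)
  with e show ?thesis by force
qed

lemma card_le_prod_card_of_nets:
  fixes d :: "'b \<Rightarrow> 'b \<Rightarrow> real" and d' :: "'c \<Rightarrow> 'c \<Rightarrow> real" and pr :: "'i \<Rightarrow> 'b \<Rightarrow> 'c"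
  assumes "finite I"
    and pm: "\<And>i. i \<in> I \<Longrightarrow> pseudometric_on d' (Xs i)"
    and close: "\<And>x y. x \<in> X \<Longrightarrow> y \<in> X \<Longrightarrow> (\<And>i. i \<in> I \<Longrightarrow> d' (pr i x) (pr i y) < 4 * \<delta>) \<Longrightarrow> d x y < \<epsilon>"
    and C: "is_packing d X \<epsilon> C"
    and pr: "\<And>c i. c \<in> C \<Longrightarrow> i \<in> I \<Longrightarrow> pr i c \<in> Xs i"
    and D: "\<And>i. i \<in> I \<Longrightarrow> finite (D i) \<and> D i \<subseteq> Xs i"
    and net: "\<And>c i. c \<in> C \<Longrightarrow> i \<in> I \<Longrightarrow> \<exists>e\<in>D i. d' (pr i c) e < 2 * \<delta>"
  shows "card C \<le> (\<Prod>i\<in>I. card (D i))"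
proof -
  define F where "F c = (\<lambda>i\<in>I. SOME e. e \<in> D i \<and> d' (pr i c) e < 2 * \<delta>)" for c
  have F: "F c i \<in> D i \<and> d' (pr i c) (F c i) < 2 * \<delta>" if "c \<in> C" "i \<in> I" for c i
  proof -
    have "\<exists>e. e \<in> D i \<and> d' (pr i c) e < 2 * \<delta>" using net[OF that] by blast
    then have "(SOME e. e \<in> D i \<and> d' (pr i c) e < 2 * \<delta>) \<in> D i \<and>
        d' (pr i c) (SOME e. e \<in> D i \<and> d' (pr i c) e < 2 * \<delta>) < 2 * \<delta>"
      by (rule someI_ex)
    then show ?thesis unfolding F_def using \<open>i \<in> I\<close> by simp
  qed
  have "inj_on F C"
  proof (rule inj_onI, rule ccontr)
    fix c c' assume c: "c \<in> C" "c' \<in> C" "F c = F c'" "c \<noteq> c'"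
    have X: "c \<in> X" "c' \<in> X" using C c(1,2) unfolding is_packing_def by blast+
    have "d' (pr i c) (pr i c') < 4 * \<delta>" if i: "i \<in> I" for i
    proof -
      have "F c i \<in> Xs i" using F[OF c(1) i] D[OF i] by blast
      then have "d' (pr i c) (pr i c') \<le> d' (pr i c) (F c i) + d' (pr i c') (F c i)"
        using pm[OF i] pr[OF c(1) i] pr[OF c(2) i] unfolding pseudometric_on_def by metis
      then show ?thesis using F[OF c(1) i] F[OF c(2) i] c(3) by simp
    qed
    then have "d c c' < \<epsilon>" using close[OF X] by blast
    moreover have "d c' c' < \<epsilon>"
    proof (rule close[OF X(2) X(2)])
      fix i assume i: "i \<in> I"
      have "d' (pr i c') (pr i c') = 0"
        using pm[OF i] pr[OF c(2) i] unfolding pseudometric_on_def by blast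
      moreover have "0 \<le> d' (pr i c') (F c' i)"
        using pseudometric_on_nonneg[OF pm[OF i]] pr[OF c(2) i] F[OF c(2) i] D[OF i] by blast
      ultimately show "d' (pr i c') (pr i c') < 4 * \<delta>" using F[OF c(2) i] by simp
    qed
    ultimately have "c' \<in> {y\<in>X. d c y < \<epsilon>} \<inter> {y\<in>X. d c' y < \<epsilon>}"
      using X by blast
    then show False
      using C c unfolding is_packing_def by blast
  qed
  moreover have "F ` C \<subseteq> (\<Pi>\<^sub>E i\<in>I. D i)"
    using F by (auto simp: F_def)
  moreover have "finite (\<Pi>\<^sub>E i\<in>I. D i)"
    using D \<open>finite I\<close> by (simp add: finite_PiE)
  ultimately have "card C \<le> card (\<Pi>\<^sub>E i\<in>I. D i)"
    by (rule card_inj_on_le)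
  then show ?thesis
    using \<open>finite I\<close> by (simp add: card_PiE)
qed

lemma prod_mono_enat:
  fixes f g :: "'i \<Rightarrow> enat"
  shows "(\<And>i. i \<in> I \<Longrightarrow> f i \<le> g i) \<Longrightarrow> prod f I \<le> prod g I"
  by (induction I rule: infinite_finite_induct) (auto intro: mult_mono)

lemma eln_enat_mono: "a \<le> b \<Longrightarrow> eln_enat a \<le> eln_enat b"
  by (cases a b rule: enat2_cases) (auto simp: eln_enat_def zero_enat_def)

lemma eln_enat_mult_le: "eln_enat (a * b) \<le> eln_enat a + eln_enat b"
  by (cases a b rule: enat2_cases) (auto simp: eln_enat_def zero_enat_def ln_mult)

lemma eln_enat_prod_le:
  fixes q :: "'i \<Rightarrow> enat"
  assumes "finite I"
  shows "eln_enat (\<Prod>i\<in>I. q i) \<le> (\<Sum>i\<in>I. eln_enat (q i))"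
  using assms
proof (induction I rule: finite_induct)
  case empty
  then show ?case by (simp add: eln_enat_def one_enat_def)
next
  case (insert j I)
  then have "eln_enat (\<Prod>i\<in>insert j I. q i) \<le> eln_enat (q j) + eln_enat (\<Prod>i\<in>I. q i)"
    by (simp add: eln_enat_mult_le)
  also have "\<dots> \<le> eln_enat (q j) + (\<Sum>i\<in>I. eln_enat (q i))"
    by (intro add_left_mono insert.IH)
  finally show ?case
    using insert.hyps by simp
qed

text \<open>The maximal packings serving as nets are taken inside the finite sets pr i ` C, so no
  finiteness of the packing numbers of the Xs i is needed.\<close>
lemma packing_num_le_prod:
  fixes d :: "'b \<Rightarrow> 'b \<Rightarrow> real" and d' :: "'c \<Rightarrow> 'c \<Rightarrow> real" and pr :: "'i \<Rightarrow> 'b \<Rightarrow> 'c"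
  assumes "finite I" "\<delta> > 0"
    and pm: "\<And>i. i \<in> I \<Longrightarrow> pseudometric_on d' (Xs i)"
    and pr: "\<And>x i. x \<in> X \<Longrightarrow> i \<in> I \<Longrightarrow> pr i x \<in> Xs i"
    and close: "\<And>x y. x \<in> X \<Longrightarrow> y \<in> X \<Longrightarrow> (\<And>i. i \<in> I \<Longrightarrow> d' (pr i x) (pr i y) < 4 * \<delta>) \<Longrightarrow> d x y < \<epsilon>"
  shows "packing_num d X \<epsilon> \<le> (\<Prod>i\<in>I. packing_num d' (Xs i) \<delta>)"
  unfolding packing_num_eq_Sup[of d]
proof (rule Sup_least, clarify)
  fix C assume C: "is_packing d X \<epsilon> C"
  then have prC: "finite (pr i ` C)" "pr i ` C \<subseteq> Xs i" if "i \<in> I" for i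
    using pr that unfolding is_packing_def by auto
  have "\<forall>i\<in>I. \<exists>D. is_packing d' (Xs i) \<delta> D \<and> D \<subseteq> pr i ` C \<and>
      (\<forall>D'. is_packing d' (Xs i) \<delta> D' \<and> D' \<subseteq> pr i ` C \<longrightarrow> card D' \<le> card D)"
    by (metis exists_maximal_packing_within prC)
  then obtain D where D: "\<And>i. i \<in> I \<Longrightarrow> is_packing d' (Xs i) \<delta> (D i) \<and> D i \<subseteq> pr i ` C \<and>
      (\<forall>D'. is_packing d' (Xs i) \<delta> D' \<and> D' \<subseteq> pr i ` C \<longrightarrow> card D' \<le> card (D i))"
    by metis
  have "card C \<le> (\<Prod>i\<in>I. card (D i))"
  proof (rule card_le_prod_card_of_nets[OF \<open>finite I\<close> pm close C])
    show "pr i c \<in> Xs i" if "c \<in> C" "i \<in> I" for c i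
      using C pr that unfolding is_packing_def by blast
    show "finite (D i) \<and> D i \<subseteq> Xs i" if "i \<in> I" for i
      using D[OF that] unfolding is_packing_def by blast
    show "\<exists>e\<in>D i. d' (pr i c) e < 2 * \<delta>" if "c \<in> C" "i \<in> I" for c i
      using D[OF \<open>i \<in> I\<close>] prC[OF \<open>i \<in> I\<close>] \<open>c \<in> C\<close>
      by (intro maximal_packing_within_is_net[OF pm[OF \<open>i \<in> I\<close>] \<open>\<delta> > 0\<close>, of "D i" "pr i ` C"]) auto
  qed auto
  then have "enat (card C) \<le> (\<Prod>i\<in>I. enat (card (D i)))"
    by (simp flip: of_nat_eq_enat of_nat_prod)
  also have "\<dots> \<le> (\<Prod>i\<in>I. packing_num d' (Xs i) \<delta>)"
    using D by (intro prod_mono_enat card_le_packing_num) blast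
  finally show "enat (card C) \<le> (\<Prod>i\<in>I. packing_num d' (Xs i) \<delta>)" .
qed

lemma eln_packing_num_le_sum:
  fixes d :: "'b \<Rightarrow> 'b \<Rightarrow> real" and d' :: "'c \<Rightarrow> 'c \<Rightarrow> real" and pr :: "'i \<Rightarrow> 'b \<Rightarrow> 'c"
  assumes "finite I" "\<delta> > 0"
    and "\<And>i. i \<in> I \<Longrightarrow> pseudometric_on d' (Xs i)"
    and "\<And>x i. x \<in> X \<Longrightarrow> i \<in> I \<Longrightarrow> pr i x \<in> Xs i"
    and "\<And>x y. x \<in> X \<Longrightarrow> y \<in> X \<Longrightarrow> (\<And>i. i \<in> I \<Longrightarrow> d' (pr i x) (pr i y) < 4 * \<delta>) \<Longrightarrow> d x y < \<epsilon>"
  shows "eln_enat (packing_num d X \<epsilon>) \<le> (\<Sum>i\<in>I. eln_enat (packing_num d' (Xs i) \<delta>))"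
  using eln_enat_mono[OF packing_num_le_prod[OF assms]] eln_enat_prod_le[OF assms(1)]
  by (rule order_trans)

section \<open>The metric on tuples of selfadjoint matrices\<close>

definition hs_dist_sq :: "nat \<Rightarrow> cmat \<Rightarrow> cmat \<Rightarrow> real" where
  "hs_dist_sq k X Y = (\<Sum>a<k. \<Sum>b<k. (cmod (X a b - Y a b))\<^sup>2)"

definition tuple_hs_dist_sq :: "nat \<Rightarrow> cmat list \<Rightarrow> cmat list \<Rightarrow> real" where
  "tuple_hs_dist_sq k xs ys = (\<Sum>j<length xs. hs_dist_sq k (xs ! j) (ys ! j))"

definition sa_tuples :: "nat \<Rightarrow> nat \<Rightarrow> cmat list set" where
  "sa_tuples k L = {xs. length xs = L \<and> (\<forall>x\<in>set xs. msa k x)}"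

lemma Gamma_subset_sa_tuples: "Gamma \<mu> L R m k \<gamma> \<subseteq> sa_tuples k L"
  unfolding Gamma_def sa_tuples_def by auto

lemma sqrt_tuple_hs_dist_sq_eq_L2_set:
  "sqrt (tuple_hs_dist_sq k xs ys)
    = L2_set (\<lambda>(j, a, b). cmod ((xs ! j) a b - (ys ! j) a b)) ({..<length xs} \<times> {..<k} \<times> {..<k})"
  unfolding L2_set_def tuple_hs_dist_sq_def hs_dist_sq_def
  by (simp add: sum.cartesian_product case_prod_beta)

lemma Re_mtr_square_msub:
  assumes "msa k X" "msa k Y"
  shows "Re (mtr k (mmul k (msub X Y) (msub X Y))) = hs_dist_sq k X Y / real k"
proof -
  have diag: "mmul k (msub X Y) (msub X Y) a a = of_real (\<Sum>b<k. (cmod (X a b - Y a b))\<^sup>2)"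
    if a: "a < k" for a
  proof -
    have "mmul k (msub X Y) (msub X Y) a a = (\<Sum>b<k. (X a b - Y a b) * (X b a - Y b a))"
      using a unfolding mmul_def msub_def by (simp only: if_True conj_absorb)
    also have "\<dots> = (\<Sum>b<k. (X a b - Y a b) * cnj (X a b - Y a b))"
    proof (rule sum.cong)
      fix b assume "b \<in> {..<k}"
      then have "X b a = cnj (X a b)" "Y b a = cnj (Y a b)"
        using assms a unfolding msa_def by blast+
      then show "(X a b - Y a b) * (X b a - Y b a) = (X a b - Y a b) * cnj (X a b - Y a b)"
        by simp
    qed simp
    also have "\<dots> = of_real (\<Sum>b<k. (cmod (X a b - Y a b))\<^sup>2)"
      unfolding of_real_sum by (rule sum.cong) (simp_all only: complex_norm_square)
    finally show ?thesis .
  qed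
  have "(\<Sum>a<k. mmul k (msub X Y) (msub X Y) a a) = of_real (hs_dist_sq k X Y)"
    unfolding hs_dist_sq_def of_real_sum by (rule sum.cong) (simp_all add: diag)
  then show ?thesis
    unfolding mtr_def by simp
qed

lemma tdist_eq_sqrt_tuple_hs_dist_sq:
  assumes "xs \<in> sa_tuples k L" "ys \<in> sa_tuples k L"
  shows "tdist k xs ys = sqrt (tuple_hs_dist_sq k xs ys / real k)"
proof -
  have "(\<Sum>i<length xs. Re (mtr k (mmul k (msub (xs ! i) (ys ! i)) (msub (xs ! i) (ys ! i)))))
      = (\<Sum>i<length xs. hs_dist_sq k (xs ! i) (ys ! i) / real k)"
    using assms by (intro sum.cong refl Re_mtr_square_msub) (auto simp: sa_tuples_def)
  then show ?thesis
    unfolding tdist_def tuple_hs_dist_sq_def by (simp add: sum_divide_distrib)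
qed

lemma sqrt_tuple_hs_dist_sq_triangle:
  assumes "length ys = length xs" "length zs = length xs"
  shows "sqrt (tuple_hs_dist_sq k xs zs) \<le> sqrt (tuple_hs_dist_sq k xs ys) + sqrt (tuple_hs_dist_sq k ys zs)"
proof -
  let ?I = "{..<length xs} \<times> {..<k} \<times> {..<k}"
  let ?f = "\<lambda>(j, a, b). cmod ((xs ! j) a b - (ys ! j) a b)"
  let ?g = "\<lambda>(j, a, b). cmod ((ys ! j) a b - (zs ! j) a b)"
  have "sqrt (tuple_hs_dist_sq k xs zs) \<le> L2_set (\<lambda>p. ?f p + ?g p) ?I"
    unfolding sqrt_tuple_hs_dist_sq_eq_L2_set
  proof (rule L2_set_mono)
    fix p assume "p \<in> ?I"
    obtain j a b where "p = (j, a, b)" by (cases p)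
    then show "(\<lambda>(j, a, b). cmod ((xs ! j) a b - (zs ! j) a b)) p \<le> ?f p + ?g p"
      using norm_triangle_ineq[of "(xs ! j) a b - (ys ! j) a b" "(ys ! j) a b - (zs ! j) a b"]
      by simp
  qed (auto simp: case_prod_beta)
  also have "\<dots> \<le> L2_set ?f ?I + L2_set ?g ?I"
    by (rule L2_set_triangle_ineq)
  finally show ?thesis
    using assms by (simp only: sqrt_tuple_hs_dist_sq_eq_L2_set)
qed

lemma pseudometric_on_tdist: "pseudometric_on (tdist k) (sa_tuples k L)"
  unfolding pseudometric_on_def
proof (intro conjI ballI)
  have eq: "tdist k xs ys = sqrt (tuple_hs_dist_sq k xs ys) / sqrt (real k)"
    if "xs \<in> sa_tuples k L" "ys \<in> sa_tuples k L" for xs ys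
    using that by (simp add: tdist_eq_sqrt_tuple_hs_dist_sq real_sqrt_divide)
  fix xs ys zs assume xs: "xs \<in> sa_tuples k L" and ys: "ys \<in> sa_tuples k L" and zs: "zs \<in> sa_tuples k L"
  then have len: "length ys = length xs" "length zs = length xs"
    by (simp_all add: sa_tuples_def)
  show "tdist k xs xs = 0"
    unfolding eq[OF xs xs] tuple_hs_dist_sq_def hs_dist_sq_def by simp
  show "tdist k xs ys = tdist k ys xs"
    unfolding eq[OF xs ys] eq[OF ys xs] tuple_hs_dist_sq_def hs_dist_sq_def
    using len by (simp add: norm_minus_commute)
  show "tdist k xs zs \<le> tdist k xs ys + tdist k ys zs"
    unfolding eq[OF xs zs] eq[OF xs ys] eq[OF ys zs] add_divide_distrib[symmetric]
    using sqrt_tuple_hs_dist_sq_triangle[OF len] by (rule divide_right_mono) simp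
qed

section \<open>Blocks of a concatenated tuple\<close>

definition block_offset :: "'a list list \<Rightarrow> nat \<Rightarrow> nat" where
  "block_offset Zs i = length (concat (take i Zs))"

definition block :: "'a list list \<Rightarrow> nat \<Rightarrow> 'b list \<Rightarrow> 'b list" where
  "block Zs i xs = take (length (Zs ! i)) (drop (block_offset Zs i) xs)"

lemma block_offset_add_length_le:
  assumes "i < length Zs"
  shows "block_offset Zs i + length (Zs ! i) \<le> length (concat Zs)"
proof -
  have "concat Zs = concat (take i Zs) @ Zs ! i @ concat (drop (Suc i) Zs)"
    using id_take_nth_drop[OF assms] by (metis concat.simps(2) concat_append)
  then show ?thesis
    unfolding block_offset_def by (metis le_add1 length_append add.assoc)
qed

lemma nth_concat_block_offset:
  assumes "i < length Zs" "j < length (Zs ! i)"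
  shows "concat Zs ! (block_offset Zs i + j) = Zs ! i ! j"
proof -
  have "concat Zs = concat (take i Zs) @ Zs ! i @ concat (drop (Suc i) Zs)"
    using id_take_nth_drop[OF assms(1)] by (metis concat.simps(2) concat_append)
  then show ?thesis
    using assms(2) unfolding block_offset_def by (simp add: nth_append)
qed

lemma length_block:
  assumes "i < length Zs" "length xs = length (concat Zs)"
  shows "length (block Zs i xs) = length (Zs ! i)"
  using block_offset_add_length_le[OF assms(1)] assms(2) unfolding block_def by simp

lemma nth_block:
  assumes "i < length Zs" "length xs = length (concat Zs)" "j < length (Zs ! i)"
  shows "block Zs i xs ! j = xs ! (block_offset Zs i + j)"
  using block_offset_add_length_le[OF assms(1)] assms unfolding block_def by simp

lemma set_block_subset: "set (block Zs i xs) \<subseteq> set xs"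
  unfolding block_def by (meson order_trans set_drop_subset set_take_subset)

lemma block_in_sa_tuples:
  assumes "i < length Zs" "xs \<in> sa_tuples k (length (concat Zs))"
  shows "block Zs i xs \<in> sa_tuples k (length (Zs ! i))"
proof -
  have "length xs = length (concat Zs)" "\<forall>x\<in>set xs. msa k x"
    using assms(2) by (simp_all add: sa_tuples_def)
  then show ?thesis
    using length_block[OF assms(1)] set_block_subset[of Zs i xs] by (auto simp: sa_tuples_def)
qed

lemma sum_concat_eq_sum_blocks:
  fixes h :: "nat \<Rightarrow> 'c::comm_monoid_add"
  shows "(\<Sum>j<length (concat Zs). h j) = (\<Sum>i<length Zs. \<Sum>j<length (Zs ! i). h (block_offset Zs i + j))"
proof (induction Zs rule: rev_induct)
  case Nil
  then show ?case by simp
next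
  case (snoc Z Zs)
  have "(\<Sum>i<length Zs. \<Sum>j<length ((Zs @ [Z]) ! i). h (block_offset (Zs @ [Z]) i + j))
      = (\<Sum>i<length Zs. \<Sum>j<length (Zs ! i). h (block_offset Zs i + j))"
    by (intro sum.cong) (simp_all add: block_offset_def nth_append)
  moreover have "(\<Sum>j<length (concat Zs) + length Z. h j)
      = (\<Sum>j<length (concat Zs). h j) + (\<Sum>j<length Z. h (length (concat Zs) + j))"
    by (induction Z) (simp_all add: add.assoc)
  ultimately show ?case
    using snoc.IH by (simp add: block_offset_def)
qed

lemma tuple_hs_dist_sq_eq_sum_blocks:
  assumes "length xs = length (concat Zs)" "length ys = length (concat Zs)"
  shows "tuple_hs_dist_sq k xs ys = (\<Sum>i<length Zs. tuple_hs_dist_sq k (block Zs i xs) (block Zs i ys))"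
  unfolding tuple_hs_dist_sq_def assms(1) sum_concat_eq_sum_blocks
  using assms by (intro sum.cong) (simp_all add: length_block nth_block)

lemma sqrt_sum_less:
  fixes a :: "'i \<Rightarrow> real"
  assumes "finite I" "I \<noteq> {}" and nonneg: "\<And>i. i \<in> I \<Longrightarrow> 0 \<le> a i"
    and less: "\<And>i. i \<in> I \<Longrightarrow> sqrt (a i) < \<epsilon> / sqrt (card I)"
  shows "sqrt (\<Sum>i\<in>I. a i) < \<epsilon>"
proof -
  have card: "real (card I) > 0" using assms(1,2) by (simp add: card_gt_0_iff)
  obtain i0 where "i0 \<in> I" using assms(2) by blast
  then have "0 < \<epsilon> / sqrt (card I)"
    using less[of i0] real_sqrt_ge_zero[OF nonneg[of i0]] by linarith
  then have "0 < \<epsilon>"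
    using card by (simp add: zero_less_divide_iff)
  have "a i < \<epsilon>\<^sup>2 / card I" if "i \<in> I" for i
  proof -
    have "sqrt (a i) < sqrt (\<epsilon>\<^sup>2 / card I)"
      using less[OF that] \<open>0 < \<epsilon>\<close> by (simp add: real_sqrt_divide)
    then show ?thesis by simp
  qed
  then have "(\<Sum>i\<in>I. a i) < (\<Sum>i\<in>I. \<epsilon>\<^sup>2 / card I)"
    using assms(1,2) by (rule sum_strict_mono[rotated 2])
  also have "\<dots> = \<epsilon>\<^sup>2" using card by simp
  finally show ?thesis
    using \<open>0 < \<epsilon>\<close> by (simp add: real_less_lsqrt)
qed

lemma tuple_hs_dist_sq_nonneg: "0 \<le> tuple_hs_dist_sq k xs ys"
  unfolding tuple_hs_dist_sq_def hs_dist_sq_def by (intro sum_nonneg) auto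

lemma tdist_less_if_blocks_less:
  assumes "Zs \<noteq> []" and xs: "xs \<in> sa_tuples k (length (concat Zs))" and ys: "ys \<in> sa_tuples k (length (concat Zs))"
    and less: "\<And>i. i < length Zs \<Longrightarrow> tdist k (block Zs i xs) (block Zs i ys) < \<epsilon> / sqrt (length Zs)"
  shows "tdist k xs ys < \<epsilon>"
proof -
  have len: "length xs = length (concat Zs)" "length ys = length (concat Zs)"
    using xs ys by (simp_all add: sa_tuples_def)
  have "sqrt (\<Sum>i<length Zs. tuple_hs_dist_sq k (block Zs i xs) (block Zs i ys) / k) < \<epsilon>"
  proof (rule sqrt_sum_less)
    fix i assume "i \<in> {..<length Zs}"
    then have "i < length Zs" by simp
    then show "sqrt (tuple_hs_dist_sq k (block Zs i xs) (block Zs i ys) / k) < \<epsilon> / sqrt (card {..<length Zs})"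
      using less[of i] tdist_eq_sqrt_tuple_hs_dist_sq[OF block_in_sa_tuples[OF _ xs] block_in_sa_tuples[OF _ ys]]
      by simp
  qed (use \<open>Zs \<noteq> []\<close> tuple_hs_dist_sq_nonneg in auto)
  then show ?thesis
    by (simp add: tdist_eq_sqrt_tuple_hs_dist_sq[OF xs ys] tuple_hs_dist_sq_eq_sum_blocks[OF len]
        sum_divide_distrib)
qed

section \<open>Microstates of a union of tuples\<close>

lemma foldr_shift_indices:
  assumes "\<And>j. j \<in> set u \<Longrightarrow> ws ! j = ws' ! (c + j)"
  shows "foldr (\<lambda>i. F (ws ! i)) u e = foldr (\<lambda>i. F (ws' ! i)) (map ((+) c) u) e"
  using assms by (induction u) auto

lemma block_mem_Gamma:
  assumes xs: "xs \<in> Gamma (vmom A \<phi> (concat Zs)) (length (concat Zs)) R m k \<gamma>"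
    and i: "i < length Zs" and "m' \<le> m" "\<gamma> \<le> \<gamma>'"
  shows "block Zs i xs \<in> Gamma (vmom A \<phi> (Zs ! i)) (length (Zs ! i)) R m' k \<gamma>'"
proof -
  have len: "length xs = length (concat Zs)" using xs by (simp add: Gamma_def)
  have "cmod (mtr k (mword k (block Zs i xs) u) - vmom A \<phi> (Zs ! i) u) < \<gamma>'"
    if u: "1 \<le> length u" "length u \<le> m'" "set u \<subseteq> {..<length (Zs ! i)}" for u
  proof -
    define u' where "u' = map ((+) (block_offset Zs i)) u"
    have "set u' \<subseteq> {..<length (concat Zs)}"
      using u block_offset_add_length_le[OF i] unfolding u'_def by auto
    moreover have "1 \<le> length u'" "length u' \<le> m" using u \<open>m' \<le> m\<close> unfolding u'_def by auto
    ultimately have "cmod (mtr k (mword k xs u') - vmom A \<phi> (concat Zs) u') < \<gamma>"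
      using xs by (auto simp: Gamma_def)
    moreover have "mword k (block Zs i xs) u = mword k xs u'"
      unfolding mword_def u'_def
      by (rule foldr_shift_indices[where F="mmul k"]) (use u i len in \<open>auto simp: nth_block\<close>)
    moreover have "vmom A \<phi> (Zs ! i) u = vmom A \<phi> (concat Zs) u'"
      unfolding vmom_def u'_def
      by (rule arg_cong[where f=\<phi>], rule foldr_shift_indices[where F="vmul A"])
        (use u i in \<open>auto simp: nth_concat_block_offset\<close>)
    ultimately show ?thesis using \<open>\<gamma> \<le> \<gamma>'\<close> by simp
  qed
  moreover have "\<forall>x\<in>set (block Zs i xs). msa k x \<and> mopnorm k x \<le> R"
    using xs set_block_subset[of Zs i xs] by (auto simp: Gamma_def)
  ultimately show ?thesis
    using length_block[OF i len] unfolding Gamma_def by blast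
qed

lemma eln_packing_num_Gamma_concat_le:
  assumes "Zs \<noteq> []" "\<epsilon> > 0"
    and m': "\<And>i. i < length Zs \<Longrightarrow> m' i \<le> m" and \<gamma>': "\<And>i. i < length Zs \<Longrightarrow> \<gamma> \<le> \<gamma>' i"
  shows "eln_enat (packing_num (tdist k) (Gamma (vmom A \<phi> (concat Zs)) (length (concat Zs)) R m k \<gamma>) \<epsilon>)
    \<le> (\<Sum>i<length Zs. eln_enat (packing_num (tdist k)
          (Gamma (vmom A \<phi> (Zs ! i)) (length (Zs ! i)) R (m' i) k (\<gamma>' i)) (\<epsilon> / (4 * sqrt (length Zs)))))"
proof (rule eln_packing_num_le_sum[where pr = "block Zs"])
  show "0 < \<epsilon> / (4 * sqrt (length Zs))"
    using assms(1,2) by simp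
  show "pseudometric_on (tdist k) (Gamma (vmom A \<phi> (Zs ! i)) (length (Zs ! i)) R (m' i) k (\<gamma>' i))" for i
    by (rule pseudometric_on_subset[OF pseudometric_on_tdist Gamma_subset_sa_tuples])
  show "block Zs i xs \<in> Gamma (vmom A \<phi> (Zs ! i)) (length (Zs ! i)) R (m' i) k (\<gamma>' i)"
    if "xs \<in> Gamma (vmom A \<phi> (concat Zs)) (length (concat Zs)) R m k \<gamma>" "i \<in> {..<length Zs}" for xs i
    using that m' \<gamma>' by (intro block_mem_Gamma) auto
  show "tdist k xs ys < \<epsilon>"
    if xs: "xs \<in> Gamma (vmom A \<phi> (concat Zs)) (length (concat Zs)) R m k \<gamma>"
      and ys: "ys \<in> Gamma (vmom A \<phi> (concat Zs)) (length (concat Zs)) R m k \<gamma>"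
      and blocks: "\<And>i. i \<in> {..<length Zs} \<Longrightarrow> tdist k (block Zs i xs) (block Zs i ys) < 4 * (\<epsilon> / (4 * sqrt (length Zs)))"
    for xs ys
  proof (rule tdist_less_if_blocks_less[OF \<open>Zs \<noteq> []\<close>])
    show "xs \<in> sa_tuples k (length (concat Zs))" "ys \<in> sa_tuples k (length (concat Zs))"
      using xs ys Gamma_subset_sa_tuples by blast+
    show "tdist k (block Zs i xs) (block Zs i ys) < \<epsilon> / sqrt (length Zs)" if "i < length Zs" for i
      using blocks[of i] that by simp
  qed
qed simp

lemma P_eps_R_mg_concat_le:
  assumes "Zs \<noteq> []" "\<epsilon> > 0"
    and "\<And>i. i < length Zs \<Longrightarrow> m' i \<le> m" "\<And>i. i < length Zs \<Longrightarrow> \<gamma> \<le> \<gamma>' i"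
  shows "P_eps_R_mg (vmom A \<phi> (concat Zs)) (length (concat Zs)) \<epsilon> R m \<gamma>
    \<le> (\<Sum>i<length Zs. P_eps_R_mg (vmom A \<phi> (Zs ! i)) (length (Zs ! i))
          (\<epsilon> / (4 * sqrt (length Zs))) R (m' i) (\<gamma>' i))"
proof -
  let ?Gi = "\<lambda>i k. Gamma (vmom A \<phi> (Zs ! i)) (length (Zs ! i)) R (m' i) k (\<gamma>' i)"
  let ?\<delta> = "\<epsilon> / (4 * sqrt (length Zs))"
  have "ereal (1 / (real k)\<^sup>2)
        * eln_enat (packing_num (tdist k) (Gamma (vmom A \<phi> (concat Zs)) (length (concat Zs)) R m k \<gamma>) \<epsilon>)
      \<le> (\<Sum>i<length Zs. ereal (1 / (real k)\<^sup>2) * eln_enat (packing_num (tdist k) (?Gi i k) ?\<delta>))" for k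
  proof -
    have c0: "0 \<le> ereal (1 / (real k)\<^sup>2)" by simp
    have "ereal (1 / (real k)\<^sup>2)
          * eln_enat (packing_num (tdist k) (Gamma (vmom A \<phi> (concat Zs)) (length (concat Zs)) R m k \<gamma>) \<epsilon>)
        \<le> ereal (1 / (real k)\<^sup>2) * (\<Sum>i<length Zs. eln_enat (packing_num (tdist k) (?Gi i k) ?\<delta>))"
      by (rule ereal_mult_left_mono[OF eln_packing_num_Gamma_concat_le[OF assms] c0])
    also have "\<dots> = (\<Sum>i<length Zs. ereal (1 / (real k)\<^sup>2) * eln_enat (packing_num (tdist k) (?Gi i k) ?\<delta>))"
      by (rule ereal_nonneg_mult_sum) simp
    finally show ?thesis .
  qed
  then have "P_eps_R_mg (vmom A \<phi> (concat Zs)) (length (concat Zs)) \<epsilon> R m \<gamma>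
      \<le> limsup (\<lambda>k. \<Sum>i<length Zs. ereal (1 / (real k)\<^sup>2) * eln_enat (packing_num (tdist k) (?Gi i k) ?\<delta>))"
    unfolding P_eps_R_mg_def by (intro Limsup_mono) simp
  also have "\<dots> \<le> (\<Sum>i<length Zs. limsup (\<lambda>k. ereal (1 / (real k)\<^sup>2) * eln_enat (packing_num (tdist k) (?Gi i k) ?\<delta>)))"
    by (rule Limsup_sum_le) simp
  finally show ?thesis
    unfolding P_eps_R_mg_def .
qed

lemma P_eps_R_concat_le:
  assumes "Zs \<noteq> []" "\<epsilon> > 0"
  shows "P_eps_R (vmom A \<phi> (concat Zs)) (length (concat Zs)) \<epsilon> R
    \<le> (\<Sum>i<length Zs. P_eps_R (vmom A \<phi> (Zs ! i)) (length (Zs ! i)) (\<epsilon> / (4 * sqrt (length Zs))) R)"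
  unfolding P_eps_R_def INF_pair
proof (rule le_sum_INF_ereal)
  fix p :: "nat \<Rightarrow> nat \<times> real"
  assume p: "\<And>i. i \<in> {..<length Zs} \<Longrightarrow> p i \<in> {1..} \<times> {0<..}"
  define m where "m = Max ((fst \<circ> p) ` {..<length Zs})"
  define \<gamma> where "\<gamma> = Min ((snd \<circ> p) ` {..<length Zs})"
  have m: "fst (p i) \<le> m" and \<gamma>: "\<gamma> \<le> snd (p i)" if "i < length Zs" for i
    unfolding m_def \<gamma>_def using that by (auto intro: Max_ge Min_le)
  have "1 \<le> m"
    using m[of 0] p[of 0] \<open>Zs \<noteq> []\<close> by force
  moreover have "0 < \<gamma>"
    unfolding \<gamma>_def using p \<open>Zs \<noteq> []\<close> by (subst Min_gr_iff) (auto simp: mem_Times_iff)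
  ultimately have "(INF q\<in>{1..} \<times> {0<..}. P_eps_R_mg (vmom A \<phi> (concat Zs)) (length (concat Zs)) \<epsilon> R (fst q) (snd q))
      \<le> P_eps_R_mg (vmom A \<phi> (concat Zs)) (length (concat Zs)) \<epsilon> R m \<gamma>"
    by (intro INF_lower2[of "(m, \<gamma>)"]) auto
  also have "\<dots> \<le> (\<Sum>i<length Zs. P_eps_R_mg (vmom A \<phi> (Zs ! i)) (length (Zs ! i))
      (\<epsilon> / (4 * sqrt (length Zs))) R (fst (p i)) (snd (p i)))"
    using assms m \<gamma> by (rule P_eps_R_mg_concat_le)
  finally show "(INF q\<in>{1..} \<times> {0<..}. P_eps_R_mg (vmom A \<phi> (concat Zs)) (length (concat Zs)) \<epsilon> R (fst q) (snd q))
      \<le> (\<Sum>i\<in>{..<length Zs}. P_eps_R_mg (vmom A \<phi> (Zs ! i)) (length (Zs ! i))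
      (\<epsilon> / (4 * sqrt (length Zs))) R (fst (p i)) (snd (p i)))" .
qed simp

lemma P_alpha_R_concat_le:
  assumes "Zs \<noteq> []"
  shows "P_alpha_R (vmom A \<phi> (concat Zs)) (length (concat Zs)) (ereal (\<Sum>i<length Zs. r i)) R
    \<le> (\<Sum>i<length Zs. P_alpha_R (vmom A \<phi> (Zs ! i)) (length (Zs ! i)) (ereal (r i)) R)
      + ereal ((\<Sum>i<length Zs. r i) * ln (4 * sqrt (length Zs)))"
  unfolding P_alpha_R_def
proof (rule Limsup_log_weighted_rescaled_sum_le)
  show "0 < 4 * sqrt (real (length Zs))"
    using assms by simp
qed (use P_eps_R_concat_le[OF assms] in auto)

lemma P_alpha_concat_le:
  assumes "Zs \<noteq> []"
  shows "P_alpha (vmom A \<phi> (concat Zs)) (length (concat Zs)) (ereal (\<Sum>i<length Zs. r i))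
    \<le> (\<Sum>i<length Zs. P_alpha (vmom A \<phi> (Zs ! i)) (length (Zs ! i)) (ereal (r i)))
      + ereal ((\<Sum>i<length Zs. r i) * ln (4 * sqrt (length Zs)))"
  unfolding P_alpha_def[of "vmom A \<phi> (concat Zs)"]
proof (rule SUP_least)
  fix R :: real assume "R \<in> {0<..}"
  then have "(\<Sum>i<length Zs. P_alpha_R (vmom A \<phi> (Zs ! i)) (length (Zs ! i)) (ereal (r i)) R)
      \<le> (\<Sum>i<length Zs. P_alpha (vmom A \<phi> (Zs ! i)) (length (Zs ! i)) (ereal (r i)))"
    unfolding P_alpha_def by (intro sum_mono SUP_upper)
  with P_alpha_R_concat_le[OF assms, of A \<phi> r R]
  show "P_alpha_R (vmom A \<phi> (concat Zs)) (length (concat Zs)) (ereal (\<Sum>i<length Zs. r i)) R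
      \<le> (\<Sum>i<length Zs. P_alpha (vmom A \<phi> (Zs ! i)) (length (Zs ! i)) (ereal (r i)))
        + ereal ((\<Sum>i<length Zs. r i) * ln (4 * sqrt (length Zs)))"
    by (meson add_right_mono order_trans)
qed

text \<open>For small \<epsilon> the weight -\<infinity> * ln(2\<epsilon>) is +\<infinity>.\<close>
lemma P_alpha_MInf: "P_alpha \<mu> L (-\<infinity>) = \<infinity>"
proof -
  have "\<infinity> \<le> P_alpha_R \<mu> L (-\<infinity>) R" for R
    unfolding P_alpha_R_def
  proof (rule le_Limsup)
    show "eventually (\<lambda>\<epsilon>. \<infinity> \<le> P_eps_R \<mu> L \<epsilon> R + (-\<infinity>) * ereal (ln (2 * \<epsilon>))) (at_right (0::real))"
      using eventually_at_right_real[of 0 "1/2::real"]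
    proof (rule eventually_mono)
      fix \<epsilon> :: real assume "\<epsilon> \<in> {0<..<1/2}"
      then have "ln (2 * \<epsilon>) < 0" by (simp add: ln_less_zero_iff)
      then show "\<infinity> \<le> P_eps_R \<mu> L \<epsilon> R + (-\<infinity>) * ereal (ln (2 * \<epsilon>))" by simp
    qed simp
  qed simp
  then show ?thesis
    unfolding P_alpha_def by (simp add: top_ereal_def[symmetric] top_unique)
qed

lemma packing_entropy_concat_le:
  fixes \<alpha> :: "nat \<Rightarrow> ereal"
  assumes "Zs \<noteq> []"
  shows "packing_entropy A \<phi> (\<Sum>i<length Zs. \<alpha> i) (concat Zs)
    \<le> (\<Sum>i<length Zs. packing_entropy A \<phi> (\<alpha> i) (Zs ! i))
      + (\<Sum>i<length Zs. \<alpha> i) * ereal (ln (4 * sqrt (length Zs)))"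
proof -
  consider (MInf) i where "i < length Zs" "\<alpha> i = -\<infinity>"
    | (PInf) i where "i < length Zs" "\<alpha> i = \<infinity>"
    | (real) r where "\<And>i. i < length Zs \<Longrightarrow> \<alpha> i = ereal (r i)"
  proof (cases "\<exists>i<length Zs. \<alpha> i = -\<infinity> \<or> \<alpha> i = \<infinity>")
    case False
    then have "\<alpha> i = ereal (real_of_ereal (\<alpha> i))" if "i < length Zs" for i
      using that by (cases "\<alpha> i") auto
    then show thesis by (rule that(3))
  qed (use that in blast)
  then show ?thesis
  proof cases
    case MInf
    then have "(\<Sum>i<length Zs. packing_entropy A \<phi> (\<alpha> i) (Zs ! i)) = \<infinity>"
      unfolding sum_Pinfty packing_entropy_def by (auto intro!: bexI[of _ i] simp: P_alpha_MInf)
    then show ?thesis by simp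
  next
    case PInf
    have "1 \<le> sqrt (length Zs)"
      using assms by (simp add: Suc_le_eq)
    then have "0 < ln (4 * sqrt (length Zs))"
      by (intro ln_gt_zero) linarith
    then have inf: "(\<Sum>i<length Zs. \<alpha> i) * ereal (ln (4 * sqrt (length Zs))) = \<infinity>"
      using PInf by (auto simp: sum_Pinfty)
    show ?thesis unfolding inf by simp
  next
    case real
    then show ?thesis
      using P_alpha_concat_le[OF assms, of A \<phi> r] by (simp add: packing_entropy_def)
  qed
qed

theorem lemma7p3:
  fixes A :: "'a wstar_alg" and \<phi> :: "'a \<Rightarrow> complex" and Zs :: "'a list list"
  assumes "von_neumann_algebra A"
    and "normal_tracial_state A \<phi>"
    and "Zs \<noteq> []"
    and "\<forall>Z\<in>set Zs. distinct Z \<and> (\<forall>z\<in>set Z. selfadj A z)"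
  shows "packing_entropy A \<phi> (\<Sum>i<length Zs. delta0 A \<phi> (Zs ! i)) (concat Zs)
    \<le> (\<Sum>i<length Zs. packing_entropy A \<phi> (delta0 A \<phi> (Zs ! i)) (Zs ! i))
      + (\<Sum>i<length Zs. delta0 A \<phi> (Zs ! i)) * ereal (ln (4 * sqrt (real (length Zs))))"
  using packing_entropy_concat_le[OF assms(3)] .

end
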